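(* Let $\mathbf{p}_0,\mathbf{p}_1,\dots,\mathbf{p}_n$ be points in $\mathbb{R}^2$ with $\mathbf{c}_i=\mathbf{p}_{i+1}-\mathbf{p}_i\neq\mathbf{0}$ for $0\le i\le n-1$. For each $i$, let an arc from $\mathbf{p}_i$ to $\mathbf{p}_{i+1}$ with signed angle $\theta_i\in(-2\pi,2\pi)$ be given (a straight segment if $\theta_i=0$). Assume the resulting curve is an arc spline: for every $1\le i\le n-1$, the unit tangent vector of arc $i-1$ at its endpoint $\mathbf{p}_i$ equals the unit tangent vector of arc $i$ at its start point $\mathbf{p}_i$ (both taken in the direction of traversal). For $1\le j\le n-1$, let $\gamma_j\in(-\pi,\pi]$ be the signed exterior angle at $\mathbf{p}_j$, i.e. the signed angle from $\mathbf{c}_{j-1}$ to $\mathbf{c}_j$, so that $\tan\gamma_j=\frac{\tilde{\mathbf{c}}_{j-1}\cdot\mathbf{c}_j}{\mathbf{c}_{j-1}\cdot\mathbf{c}_j}$. Then for every $0\le i\le n-1$, $$\theta_i\equiv(-1)^i\left[\theta_0+2\sum_{j=1}^{i}(-1)^j\gamma_j\right]\pmod{4\pi}.$$ Thus each $\theta_i$ is determined by $\theta_0$ and the exterior angles $\gamma_1,\dots,\gamma_i$ of the polygonal curve.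
   Context: For a vector $\mathbf{a}=(a_1,a_2)\in\mathbb{R}^2$, $\tilde{\mathbf{a}}=(-a_2,a_1)$ denotes its counterclockwise rotation by $\pi/2$, and $\mathbf{a}\cdot\mathbf{b}$ is the standard dot product. The signed enclosed angle $\theta$ of a circular arc from $A$ to $B$ with center $C$ is defined as follows: the arc consists of the points obtained by rotating $A$ about $C$ through the angles $\varphi$ between $0$ and $\theta$, and the rotation through $\theta$ takes $A$ to $B$. Thus $\theta>0$ means the arc is traversed counterclockwise and $\theta<0$ means it is traversed clockwise. The value $\theta=0$ corresponds to the straight segment. *)

theory Defs
  imports "HOL-Analysis.Analysis"
begin

(* R^2 is identified with the complex plane; rotation by phi counterclockwise
   is multiplication by cis phi, and a~ = \<i> * a. *)

definition arc_curve :: "complex \<Rightarrow> complex \<Rightarrow> complex \<Rightarrow> real \<Rightarrow> real \<Rightarrow> complex" where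
  "arc_curve A B C \<theta> t =
     (if \<theta> = 0 then A + of_real t * (B - A) else C + cis (t * \<theta>) * (A - C))"

definition unit_tangent :: "(real \<Rightarrow> complex) \<Rightarrow> real \<Rightarrow> complex" where
  "unit_tangent g t = sgn (vector_derivative g (at t))"

definition exterior_angle :: "(nat \<Rightarrow> complex) \<Rightarrow> nat \<Rightarrow> real" where
  "exterior_angle p j = Arg ((p (Suc j) - p j) / (p j - p (j - 1)))"

end

theory Submission
  imports Defs
begin

text \<open>The chord of an arc with signed angle \<open>\<theta>\<close> makes the angle \<open>\<theta>/2\<close> with both end
  tangents: the unit tangents at the start and at the end are \<open>sgn c \<cdot> cis (-\<theta>/2)\<close> and
  \<open>sgn c \<cdot> cis (\<theta>/2)\<close>, where \<open>c\<close> is the chord.  Tangent continuity at \<open>p (i+1)\<close> therefore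
  reads \<open>cis ((\<theta> i + \<theta> (i+1))/2) = sgn (c (i+1) / c i) = cis \<gamma> (i+1)\<close>, i.e.
  \<open>\<theta> (i+1) \<equiv> 2 \<gamma> (i+1) - \<theta> i\<close> modulo \<open>4 \<pi>\<close>, and this alternating recurrence solves to the
  claimed formula.\<close>

lemma cis_minus_one: "cis \<theta> - 1 = 2 * \<i> * of_real (sin (\<theta>/2)) * cis (\<theta>/2)"
proof -
  have "cis \<theta> - 1 = (cis (\<theta>/2) - cis (-\<theta>/2)) * cis (\<theta>/2)"
    by (simp add: algebra_simps cis_mult)
  also have "cis (\<theta>/2) - cis (-\<theta>/2) = 2 * \<i> * of_real (sin (\<theta>/2))"
    by (simp add: complex_eq_iff)
  finally show ?thesis .
qed

lemma sgn_sin_half: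
  assumes "-2*pi < \<theta>" "\<theta> < 2*pi"
  shows "sgn (sin (\<theta>/2)) = sgn \<theta>"
proof (cases "\<theta>" "0::real" rule: linorder_cases)
  case less
  then have "sin (-\<theta>/2) > 0" using assms by (intro sin_gt_zero) auto
  with less show ?thesis by simp
next
  case greater
  then have "sin (\<theta>/2) > 0" using assms by (intro sin_gt_zero) auto
  with greater show ?thesis by simp
qed simp

lemma sgn_cis_minus_one:
  assumes "-2*pi < \<theta>" "\<theta> < 2*pi"
  shows "sgn (cis \<theta> - 1) = \<i> * of_real (sgn \<theta>) * cis (\<theta>/2)"
proof -
  have "sgn (2 * \<i> :: complex) = \<i>"
    by (simp add: sgn_div_norm norm_mult)
  then show ?thesis
    by (simp add: cis_minus_one sgn_mult sgn_of_real sgn_sin_half[OF assms])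
qed

lemma vector_derivative_arc_curve:
  assumes "\<theta> \<noteq> 0"
  shows "vector_derivative (arc_curve A B C \<theta>) (at t) = \<i> * of_real \<theta> * cis (t*\<theta>) * (A - C)"
proof -
  define f where "f z = C + exp (\<i> * of_real \<theta> * z) * (A - C)" for z
  have "(f has_field_derivative \<i> * of_real \<theta> * exp (\<i> * of_real \<theta> * of_real t) * (A - C))
          (at (of_real t))"
    unfolding f_def by (auto intro!: derivative_eq_intros)
  then have "((\<lambda>x. f (of_real x)) has_vector_derivative
               \<i> * of_real \<theta> * exp (\<i> * of_real \<theta> * of_real t) * (A - C)) (at t)"
    by (rule has_vector_derivative_real_field)
  moreover have "(\<lambda>x. f (of_real x)) = arc_curve A B C \<theta>"
    using assms by (auto simp: f_def arc_curve_def cis_conv_exp mult_ac fun_eq_iff)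
  ultimately show ?thesis
    by (simp add: vector_derivative_at cis_conv_exp mult_ac)
qed

lemma vector_derivative_arc_curve_segment:
  "vector_derivative (arc_curve A B C 0) (at t) = B - A"
proof -
  have "((\<lambda>x. A + of_real x * (B - A)) has_vector_derivative (B - A)) (at t)"
    by (rule has_vector_derivative_real_field) (auto intro!: derivative_eq_intros)
  moreover have "(\<lambda>x. A + of_real x * (B - A)) = arc_curve A B C 0"
    by (auto simp: arc_curve_def fun_eq_iff)
  ultimately show ?thesis by (simp add: vector_derivative_at)
qed

lemma unit_tangent_arc_curve:
  assumes "-2*pi < \<theta>" "\<theta> < 2*pi"
    and "\<theta> \<noteq> 0 \<Longrightarrow> B = C + cis \<theta> * (A - C)"
  shows "unit_tangent (arc_curve A B C \<theta>) t = sgn (B - A) * cis ((t - 1/2) * \<theta>)"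
proof (cases "\<theta> = 0")
  case True
  then show ?thesis by (simp add: unit_tangent_def vector_derivative_arc_curve_segment)
next
  case False
  have "sgn \<i> = \<i>" by (simp add: sgn_div_norm)
  then have "unit_tangent (arc_curve A B C \<theta>) t
           = \<i> * of_real (sgn \<theta>) * cis (t*\<theta>) * sgn (A - C)"
    by (simp add: unit_tangent_def vector_derivative_arc_curve[OF False] sgn_mult sgn_of_real)
  also have "\<dots> = (\<i> * of_real (sgn \<theta>) * cis (\<theta>/2)) * sgn (A - C) * cis ((t - 1/2) * \<theta>)"
    by (simp add: cis_mult algebra_simps)
  also have "\<dots> = sgn (B - A) * cis ((t - 1/2) * \<theta>)"
  proof -
    have "B - A = (cis \<theta> - 1) * (A - C)" using assms(3) False by (simp add: algebra_simps)
    then show ?thesis by (simp add: sgn_mult sgn_cis_minus_one[OF assms(1,2)])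
  qed
  finally show ?thesis .
qed

lemma cis_eq_cisE:
  assumes "cis a = cis b"
  obtains n :: int where "a = b + 2 * pi * of_int n"
  using assms sin_cos_eq_iff[of a b] by (auto simp: complex_eq_iff)

lemma tangent_continuous_arcs_angle:
  assumes "B \<noteq> A" "D \<noteq> B"
    and "-2*pi < \<theta>" "\<theta> < 2*pi" "-2*pi < \<theta>'" "\<theta>' < 2*pi"
    and "\<theta> \<noteq> 0 \<Longrightarrow> B = C + cis \<theta> * (A - C)"
    and "\<theta>' \<noteq> 0 \<Longrightarrow> D = C' + cis \<theta>' * (B - C')"
    and "unit_tangent (arc_curve A B C \<theta>) 1 = unit_tangent (arc_curve B D C' \<theta>') 0"
  shows "\<exists>k::int. \<theta>' = - \<theta> + 2 * Arg ((D - B) / (B - A)) + 4 * pi * of_int k"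
proof -
  have tangents: "sgn (B - A) * cis (\<theta>/2) = sgn (D - B) * cis (-\<theta>'/2)"
    using assms(9) unit_tangent_arc_curve[of \<theta> B C A 1] unit_tangent_arc_curve[of \<theta>' D C' B 0]
      assms(3-8) by simp
  have "sgn (B - A) * cis ((\<theta> + \<theta>')/2) = sgn (B - A) * cis (\<theta>/2) * cis (\<theta>'/2)"
    by (simp add: cis_mult add_divide_distrib)
  also have "\<dots> = sgn (D - B) * (cis (-\<theta>'/2) * cis (\<theta>'/2))"
    by (simp add: tangents)
  also have "\<dots> = sgn (D - B)"
    by (simp add: cis_mult)
  finally have "cis ((\<theta> + \<theta>')/2) = sgn (D - B) / sgn (B - A)"
    using assms(1) by (simp add: field_simps sgn_zero_iff)
  also have "\<dots> = cis (Arg ((D - B) / (B - A)))"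
    using assms(1,2) by (simp add: cis_Arg sgn_divide)
  finally obtain m :: int where "(\<theta> + \<theta>')/2 = Arg ((D - B) / (B - A)) + 2 * pi * of_int m"
    by (rule cis_eq_cisE)
  then have "\<theta>' = - \<theta> + 2 * Arg ((D - B) / (B - A)) + 4 * pi * of_int m"
    by (simp add: field_simps)
  then show ?thesis by blast
qed

lemma alternating_recurrence_mod:
  fixes x g :: "nat \<Rightarrow> real" and c :: real
  assumes step: "\<And>i. Suc i < n \<Longrightarrow> \<exists>k::int. x (Suc i) = - x i + 2 * g (Suc i) + c * of_int k"
    and "i < n"
  shows "\<exists>k::int. x i = (-1) ^ i * (x 0 + 2 * (\<Sum>j=1..i. (-1) ^ j * g j)) + c * of_int k"
  using \<open>i < n\<close>
proof (induction i)
  case 0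
  show ?case by (intro exI[of _ 0]) simp
next
  case (Suc i)
  define S where "S = (\<Sum>j=1..i. (-1) ^ j * g j)"
  obtain k :: int where k: "x i = (-1) ^ i * (x 0 + 2 * S) + c * of_int k"
    using Suc unfolding S_def by auto
  obtain m :: int where m: "x (Suc i) = - x i + 2 * g (Suc i) + c * of_int m"
    using step Suc.prems by blast
  have "((-1::real) ^ Suc i) * (-1) ^ Suc i = 1"
    by (simp flip: power_add)
  then have "x (Suc i) = (-1) ^ Suc i * (x 0 + 2 * (S + (-1) ^ Suc i * g (Suc i)))
                         + c * of_int (m - k)"
    using m k by (simp add: algebra_simps)
  then show ?case by (intro exI[of _ "m - k"]) (simp add: S_def)
qed

theorem theorem5:
  fixes p :: "nat \<Rightarrow> complex" and C :: "nat \<Rightarrow> complex"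
    and \<theta> :: "nat \<Rightarrow> real" and n :: nat
  assumes nondeg: "\<forall>i<n. p (Suc i) - p i \<noteq> 0"
    and angle_range: "\<forall>i<n. -2*pi < \<theta> i \<and> \<theta> i < 2*pi"
    and arcs: "\<forall>i<n. \<theta> i \<noteq> 0 \<longrightarrow> p (Suc i) = C i + cis (\<theta> i) * (p i - C i)"
    and spline: "\<forall>i. 1 \<le> i \<and> i < n \<longrightarrow>
       unit_tangent (arc_curve (p (i - 1)) (p i) (C (i - 1)) (\<theta> (i - 1))) 1
       = unit_tangent (arc_curve (p i) (p (Suc i)) (C i) (\<theta> i)) 0"
  shows "\<forall>i<n. \<exists>k::int. \<theta> i =
     (-1) ^ i * (\<theta> 0 + 2 * (\<Sum>j=1..i. (-1) ^ j * exterior_angle p j)) + 4 * pi * of_int k"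
proof (intro allI impI)
  fix i assume "i < n"
  have "\<exists>k::int. \<theta> (Suc i) = - \<theta> i + 2 * exterior_angle p (Suc i) + 4 * pi * of_int k"
    if "Suc i < n" for i
    unfolding exterior_angle_def diff_Suc_1
    using that nondeg angle_range arcs spline[rule_format, of "Suc i"]
    by (intro tangent_continuous_arcs_angle[where C = "C i" and C' = "C (Suc i)"]) auto
  then show "\<exists>k::int. \<theta> i =
     (-1) ^ i * (\<theta> 0 + 2 * (\<Sum>j=1..i. (-1) ^ j * exterior_angle p j)) + 4 * pi * of_int k"
    using alternating_recurrence_mod \<open>i < n\<close> by blast
qed

end
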